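(* Let $q\neq0$ and let $\gamma\colon I\to\mathbb R^3$ be a curve parametrized by arc-length which is not a straight line and satisfies $\gamma''=q\,\gamma\times\gamma'$ (i.e. $\gamma$ is a conformal trajectory of the radial vector field $V(x,y,z)=x\partial_x+y\partial_y+z\partial_z$). Then the curvature of $\gamma$ is a nonzero constant $\kappa_0$, and there exists $a_0\in\mathbb R$ such that $\langle\gamma(s),\gamma'(s)\rangle=s+a_0$, the torsion is the affine function $\tau(s)=q(s+a_0)$, and $$\gamma(s)=(s+a_0)\gamma'(s)+\frac1q\,\gamma'(s)\times\gamma''(s)\quad\text{for all }s\in I.$$
   Context: $\times$ denotes the usual cross product of $\mathbb R^3$ and $\langle\cdot,\cdot\rangle$ the Euclidean inner product. Frenet frame of a non-straight unit-speed curve: $T=\gamma'$, $T'=\kappa N$ with $\kappa>0$, $B=T\times N$, $N'=-\kappa T+\tau B$, $B'=-\tau N$; $\kappa$ is the curvature and $\tau$ the torsion. *)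

theory Defs
  imports "HOL-Analysis.Analysis" "HOL-Analysis.Cross3"
begin

text \<open>Frenet apparatus of a unit-speed curve, given its first derivative g1 = gamma'
  (the unit tangent T) and second derivative g2 = gamma''.\<close>

definition curvature :: "(real \<Rightarrow> real^3) \<Rightarrow> real \<Rightarrow> real" where
  "curvature g2 s = norm (g2 s)"

definition frenet_N :: "(real \<Rightarrow> real^3) \<Rightarrow> real \<Rightarrow> real^3" where
  "frenet_N g2 s = (1 / norm (g2 s)) *\<^sub>R g2 s"

definition frenet_B :: "(real \<Rightarrow> real^3) \<Rightarrow> (real \<Rightarrow> real^3) \<Rightarrow> real \<Rightarrow> real^3" where
  "frenet_B g1 g2 s = cross3 (g1 s) (frenet_N g2 s)"

definition is_torsion_at :: "(real \<Rightarrow> real^3) \<Rightarrow> (real \<Rightarrow> real^3) \<Rightarrow> real \<Rightarrow> real \<Rightarrow> bool" where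
  "is_torsion_at g1 g2 s tau \<longleftrightarrow>
     (frenet_N g2 has_vector_derivative
        ((- curvature g2 s) *\<^sub>R g1 s + tau *\<^sub>R frenet_B g1 g2 s)) (at s)"

end

theory Submission
  imports Defs
begin

text \<open>Differentiating \<open>\<gamma>'' = q \<gamma> \<times> \<gamma>'\<close> gives \<open>\<gamma>''' = q \<gamma> \<times> \<gamma>''\<close>, which is orthogonal to \<open>\<gamma>''\<close>,
  so the curvature \<open>|\<gamma>''|\<close> is constant. Since \<open>\<gamma>''\<close> is orthogonal to \<open>\<gamma>\<close>, the derivative of
  \<open>\<langle>\<gamma>, \<gamma>'\<rangle>\<close> is \<open>|\<gamma>'|\<^sup>2 = 1\<close>, so \<open>\<langle>\<gamma>, \<gamma>'\<rangle> = s + a\<^sub>0\<close>. Expanding \<open>\<gamma>' \<times> \<gamma>'' = q \<gamma>' \<times> (\<gamma> \<times> \<gamma>')\<close>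
  by the triple product rule recovers \<open>\<gamma>\<close> from its components along \<open>\<gamma>'\<close> and \<open>\<gamma>' \<times> \<gamma>''\<close>;
  substituting this into \<open>N' = \<gamma>'''/\<kappa>\<^sub>0\<close> exhibits the torsion \<open>q (s + a\<^sub>0)\<close>.\<close>

unbundle cross3_syntax

lemma bounded_bilinear_cross3: "bounded_bilinear cross3"
  using bilinear_cross bilinear_conv_bounded_bilinear by blast

lemma cross3_cross3_right: "a \<times> (b \<times> c) = (a \<bullet> c) *\<^sub>R b - (a \<bullet> b) *\<^sub>R c"
  by (simp add: cross3_simps forall_3)

lemma cross3_cross3_orthogonal:
  assumes "a \<bullet> b = 0"
  shows "(a \<times> b) \<times> b = - (b \<bullet> b) *\<^sub>R a"
  using assms cross_skew[of "a \<times> b" b] by (simp add: cross3_cross3_right inner_commute)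

lemma has_vector_derivative_cross3:
  assumes "(f has_vector_derivative f') (at x within S)"
    and "(g has_vector_derivative g') (at x within S)"
  shows "((\<lambda>x. f x \<times> g x) has_vector_derivative f x \<times> g' + f' \<times> g x) (at x within S)"
  using bounded_bilinear_cross3 assms by (rule bounded_bilinear.has_vector_derivative)

lemma has_vector_derivative_inner:
  assumes "(f has_vector_derivative f') (at x within S)"
    and "(g has_vector_derivative g') (at x within S)"
  shows "((\<lambda>x. f x \<bullet> g x) has_vector_derivative f x \<bullet> g' + f' \<bullet> g x) (at x within S)"
  using bounded_bilinear_inner assms by (rule bounded_bilinear.has_vector_derivative)

lemma has_vector_derivative_zero_constant_interval:
  fixes f :: "real \<Rightarrow> 'a::real_normed_vector"
  assumes "is_interval I" and "\<And>s. s \<in> I \<Longrightarrow> (f has_vector_derivative 0) (at s)"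
  obtains c where "\<And>s. s \<in> I \<Longrightarrow> f s = c"
  using is_interval_convex[OF assms(1)]
  by (rule has_vector_derivative_zero_constant) (auto intro: has_vector_derivative_at_within assms(2) that)

lemma frenet_N_has_vector_derivative_constant_curvature:
  assumes "open I" "s \<in> I" and "\<And>x. x \<in> I \<Longrightarrow> curvature g2 x = k"
    and "(g2 has_vector_derivative g3) (at s)"
  shows "(frenet_N g2 has_vector_derivative (1 / k) *\<^sub>R g3) (at s)"
proof (rule has_vector_derivative_transform_within_open[OF _ \<open>open I\<close> \<open>s \<in> I\<close>])
  show "((\<lambda>x. (1 / k) *\<^sub>R g2 x) has_vector_derivative (1 / k) *\<^sub>R g3) (at s)"
    using assms(4) by (rule bounded_linear.has_vector_derivative[OF bounded_linear_scaleR_right])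
  show "(1 / k) *\<^sub>R g2 x = frenet_N g2 x" if "x \<in> I" for x
    using assms(3)[OF that] by (simp add: frenet_N_def curvature_def)
qed

locale radial_conformal_trajectory =
  fixes q :: real and I :: "real set" and \<gamma> \<gamma>1 \<gamma>2 :: "real \<Rightarrow> real^3"
  assumes q: "q \<noteq> 0"
    and open_I: "open I" and interval_I: "is_interval I"
    and d1: "\<And>s. s \<in> I \<Longrightarrow> (\<gamma> has_vector_derivative \<gamma>1 s) (at s)"
    and d2: "\<And>s. s \<in> I \<Longrightarrow> (\<gamma>1 has_vector_derivative \<gamma>2 s) (at s)"
    and unit: "\<And>s. s \<in> I \<Longrightarrow> norm (\<gamma>1 s) = 1"
    and eq: "\<And>s. s \<in> I \<Longrightarrow> \<gamma>2 s = q *\<^sub>R (\<gamma> s \<times> \<gamma>1 s)"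
begin

lemma tangent_orthogonal_second_derivative: "s \<in> I \<Longrightarrow> \<gamma>1 s \<bullet> \<gamma>2 s = 0"
  using eq by (simp add: dot_cross_self)

lemma third_derivative: "s \<in> I \<Longrightarrow> (\<gamma>2 has_vector_derivative q *\<^sub>R (\<gamma> s \<times> \<gamma>2 s)) (at s)"
proof (rule has_vector_derivative_transform_within_open[OF _ open_I])
  assume s: "s \<in> I"
  have "((\<lambda>x. \<gamma> x \<times> \<gamma>1 x) has_vector_derivative \<gamma> s \<times> \<gamma>2 s) (at s)"
    using has_vector_derivative_cross3[OF d1[OF s] d2[OF s]] by simp
  then show "((\<lambda>x. q *\<^sub>R (\<gamma> x \<times> \<gamma>1 x)) has_vector_derivative q *\<^sub>R (\<gamma> s \<times> \<gamma>2 s)) (at s)"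
    by (rule bounded_linear.has_vector_derivative[OF bounded_linear_scaleR_right])
qed (simp_all add: eq)

lemma curvature_constant: obtains k where "\<And>s. s \<in> I \<Longrightarrow> curvature \<gamma>2 s = k"
proof -
  have "((\<lambda>x. \<gamma>2 x \<bullet> \<gamma>2 x) has_vector_derivative 0) (at s)" if "s \<in> I" for s
    using has_vector_derivative_inner[OF third_derivative[OF that] third_derivative[OF that]]
    by (simp add: dot_cross_self)
  then obtain c where "\<And>s. s \<in> I \<Longrightarrow> \<gamma>2 s \<bullet> \<gamma>2 s = c"
    using has_vector_derivative_zero_constant_interval[OF interval_I] by blast
  then show thesis
    by (intro that[of "sqrt c"]) (simp add: curvature_def norm_eq_sqrt_inner)
qed

lemma inner_position_tangent_affine: obtains a0 where "\<And>s. s \<in> I \<Longrightarrow> \<gamma> s \<bullet> \<gamma>1 s = s + a0"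
proof -
  have "((\<lambda>x. \<gamma> x \<bullet> \<gamma>1 x - x) has_vector_derivative 0) (at s)" if s: "s \<in> I" for s
  proof -
    have "\<gamma> s \<bullet> \<gamma>2 s + \<gamma>1 s \<bullet> \<gamma>1 s = 1"
      using eq[OF s] unit[OF s] by (simp add: dot_cross_self norm_eq_1)
    then have "((\<lambda>x. \<gamma> x \<bullet> \<gamma>1 x) has_vector_derivative 1) (at s)"
      using has_vector_derivative_inner[OF d1[OF s] d2[OF s]] by (simp add: inner_commute)
    then show ?thesis
      by (auto intro!: derivative_eq_intros)
  qed
  then obtain a0 where "\<And>s. s \<in> I \<Longrightarrow> \<gamma> s \<bullet> \<gamma>1 s - s = a0"
    using has_vector_derivative_zero_constant_interval[OF interval_I] by blast
  then show thesis
    by (intro that[of a0]) (simp add: algebra_simps)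
qed

context
  fixes a0 :: real
  assumes a0: "\<And>s. s \<in> I \<Longrightarrow> \<gamma> s \<bullet> \<gamma>1 s = s + a0"
begin

lemma position_decomposition:
  assumes s: "s \<in> I"
  shows "\<gamma> s = (s + a0) *\<^sub>R \<gamma>1 s + (1 / q) *\<^sub>R (\<gamma>1 s \<times> \<gamma>2 s)"
proof -
  have "\<gamma>1 s \<times> \<gamma>2 s = q *\<^sub>R (\<gamma> s - (s + a0) *\<^sub>R \<gamma>1 s)"
    using eq[OF s] a0[OF s] unit[OF s]
    by (simp add: cross_mult_right cross3_cross3_right norm_eq_1 inner_commute algebra_simps)
  then show ?thesis
    using q by simp
qed

lemma torsion_affine:
  assumes s: "s \<in> I" and k: "\<And>x. x \<in> I \<Longrightarrow> curvature \<gamma>2 x = k" "k \<noteq> 0"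
  shows "is_torsion_at \<gamma>1 \<gamma>2 s (q * (s + a0))"
proof -
  have norm_\<gamma>2: "norm (\<gamma>2 s) = k"
    using k(1)[OF s] by (simp add: curvature_def)
  have "(\<gamma>1 s \<times> \<gamma>2 s) \<times> \<gamma>2 s = - (k * k) *\<^sub>R \<gamma>1 s"
    using tangent_orthogonal_second_derivative[OF s] norm_\<gamma>2
    by (simp add: cross3_cross3_orthogonal power2_eq_square flip: power2_norm_eq_inner)
  then have "q *\<^sub>R (\<gamma> s \<times> \<gamma>2 s) = (q * (s + a0)) *\<^sub>R (\<gamma>1 s \<times> \<gamma>2 s) - (k * k) *\<^sub>R \<gamma>1 s"
    using q by (subst position_decomposition[OF s]) (simp add: cross_add_left cross_mult_left scaleR_diff_right)
  then have "(1 / k) *\<^sub>R (q *\<^sub>R (\<gamma> s \<times> \<gamma>2 s))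
      = - k *\<^sub>R \<gamma>1 s + (q * (s + a0)) *\<^sub>R ((1 / k) *\<^sub>R (\<gamma>1 s \<times> \<gamma>2 s))"
    using k(2) by (simp add: scaleR_diff_right)
  then have "(1 / k) *\<^sub>R (q *\<^sub>R (\<gamma> s \<times> \<gamma>2 s))
      = (- curvature \<gamma>2 s) *\<^sub>R \<gamma>1 s + (q * (s + a0)) *\<^sub>R frenet_B \<gamma>1 \<gamma>2 s"
    by (simp add: k(1)[OF s] frenet_B_def frenet_N_def norm_\<gamma>2 cross_mult_right)
  with frenet_N_has_vector_derivative_constant_curvature[OF open_I s k(1) third_derivative[OF s]]
  show ?thesis
    by (simp add: is_torsion_at_def)
qed

end

end

theorem theorem1:
  fixes q :: real and I :: "real set"
    and \<gamma> \<gamma>1 \<gamma>2 :: "real \<Rightarrow> real^3"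
  assumes q: "q \<noteq> 0"
    and I: "open I" "is_interval I" "I \<noteq> {}"
    and d1: "\<And>s. s \<in> I \<Longrightarrow> (\<gamma> has_vector_derivative \<gamma>1 s) (at s)"
    and d2: "\<And>s. s \<in> I \<Longrightarrow> (\<gamma>1 has_vector_derivative \<gamma>2 s) (at s)"
    and unit: "\<And>s. s \<in> I \<Longrightarrow> norm (\<gamma>1 s) = 1"
    and not_line: "\<exists>s\<in>I. \<gamma>2 s \<noteq> 0"
    and eq: "\<And>s. s \<in> I \<Longrightarrow> \<gamma>2 s = q *\<^sub>R cross3 (\<gamma> s) (\<gamma>1 s)"
  shows "\<exists>\<kappa>0. \<kappa>0 \<noteq> 0 \<and> (\<forall>s\<in>I. curvature \<gamma>2 s = \<kappa>0) \<and>
           (\<exists>a0. \<forall>s\<in>I. \<gamma> s \<bullet> \<gamma>1 s = s + a0 \<and>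
                         is_torsion_at \<gamma>1 \<gamma>2 s (q * (s + a0)) \<and>
                         \<gamma> s = (s + a0) *\<^sub>R \<gamma>1 s + (1 / q) *\<^sub>R cross3 (\<gamma>1 s) (\<gamma>2 s))"
proof -
  interpret radial_conformal_trajectory q I \<gamma> \<gamma>1 \<gamma>2
    using assms by unfold_locales simp_all
  obtain k where k: "\<And>s. s \<in> I \<Longrightarrow> curvature \<gamma>2 s = k"
    using curvature_constant by blast
  have "k \<noteq> 0"
    using not_line k by (force simp: curvature_def)
  moreover obtain a0 where a0: "\<And>s. s \<in> I \<Longrightarrow> \<gamma> s \<bullet> \<gamma>1 s = s + a0"
    using inner_position_tangent_affine by blast
  ultimately show ?thesis
    using k position_decomposition[OF a0] torsion_affine[OF a0 _ k] by blast
qed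

end
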